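(* Let $f(z)=\sum_{k=0}^d\alpha_kz^k$ be a complex polynomial of degree $d\ge 2$, and consider $z'=f(z)$ as the real planar system $x'=P(x,y)$, $y'=Q(x,y)$ with $P=\operatorname{Re} f(x+iy)$, $Q=\operatorname{Im} f(x+iy)$. Let $p=(p_1,p_2)\in\mathbb{R}^2$, $\|p\|=1$, be a critical point at infinity, and let $\alpha\in\mathbb{R}$ be such that $(P_d(p_1,p_2),Q_d(p_1,p_2))^{\top}=\alpha\,(p_1,p_2)^{\top}$. Then $\alpha\neq 0$. Moreover, if $\alpha>0$ there is a solution $z^*$ of $z'=f(z)$ defined on a maximal interval $(t_{\min},t_{\max})$ with $t_{\max}<\infty$ that diverges to $p_\infty$ as $t\to t_{\max}^-$ (a positive separatrix ending at $p$); if $\alpha<0$ there is a solution with $t_{\min}>-\infty$ that diverges to $p_\infty$ as $t\to t_{\min}^+$ (a negative separatrix starting at $p$).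
   Context: $P_d,Q_d$ denote the homogeneous parts of degree $d$ of $P,Q$. A critical point at infinity is $p$ with $\|p\|=1$ and $p_1Q_d(p_1,p_2)-p_2P_d(p_1,p_2)=0$ (equivalently, $(P_d(p),Q_d(p))$ is a real multiple of $p$). A continuous curve $y(t)$ diverges to $p_\infty$ as $t\to t_{\max}^-$ if $\|y(t)\|\to\infty$ and $y(t)/\|y(t)\|\to p$. A trajectory $\gamma$ of $z'=f(z)$ is a positive (negative) separatrix if there is a point $z\in\gamma$ such that the maximal interval of existence of the solution starting at $z$ in positive (negative) time is finite. *)

theory Defs
  imports "HOL-Analysis.Analysis" "HOL-Computational_Algebra.Polynomial"
begin

text \<open>Homogeneous part of degree k of P(x,y) = Re f(x+iy) and Q(x,y) = Im f(x+iy).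
  Since (x+iy)^j is a homogeneous polynomial of degree j in (x,y), the
  degree-k homogeneous part of f(x+iy) is exactly coeff f k * (x+iy)^k.\<close>
definition hom_P :: "complex poly \<Rightarrow> nat \<Rightarrow> real \<Rightarrow> real \<Rightarrow> real" where
  "hom_P f k x y = Re (coeff f k * Complex x y ^ k)"

definition hom_Q :: "complex poly \<Rightarrow> nat \<Rightarrow> real \<Rightarrow> real \<Rightarrow> real" where
  "hom_Q f k x y = Im (coeff f k * Complex x y ^ k)"

definition ode_solution_on :: "complex poly \<Rightarrow> (real \<Rightarrow> complex) \<Rightarrow> real set \<Rightarrow> bool" where
  "ode_solution_on f z I \<longleftrightarrow> (\<forall>t\<in>I. (z has_vector_derivative poly f (z t)) (at t))"

definition maximal_solution :: "complex poly \<Rightarrow> (real \<Rightarrow> complex) \<Rightarrow> real set \<Rightarrow> bool" where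
  "maximal_solution f z I \<longleftrightarrow> I \<noteq> {} \<and> open I \<and> is_interval I \<and> ode_solution_on f z I \<and>
     (\<forall>J w. open J \<and> is_interval J \<and> I \<subseteq> J \<and> ode_solution_on f w J \<and> (\<forall>t\<in>I. w t = z t)
        \<longrightarrow> J = I)"

end

theory Submission
  imports Defs "HOL-Complex_Analysis.Complex_Analysis"
begin

text \<open>Put w = 1/z and let q be the reflected polynomial of f, so that q(0) = a is the leading
  coefficient. Near w = 0 the equation reads w' = - q(w) / w^(d-2), so time along a solution is
  a primitive H of - w^(d-2) / q(w). This primitive factors as H(w) = w^(d-1) G(w) with
  G(0) = -1 / ((d-1) a); a holomorphic (d-1)-th root of G makes H the (d-1)-th power of a local
  coordinate, so the level curves H(w) = -\<tau> leave w = 0 in the directions \<beta> with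
  \<beta>^(d-1) G(0) = -1. As a p^d = \<alpha> p and |p| = 1, we have a = \<alpha> conj(p)^(d-1); hence for
  \<alpha> > 0 one of these directions is conj(p), and z = 1/w solves the reversed flow z' = -f(z),
  coming from the point p at infinity at \<tau> = 0. Reversing time (for \<alpha> < 0: applying this to -f)
  and extending to a maximal solution by Zorn's lemma gives the separatrix; its interval ends
  exactly at the blow-up time, since a solution is continuous at every interior point.\<close>

section \<open>Maximal solutions\<close>

text \<open>Extensions of a solution are ordered by inclusion of their graphs; this is the partial
  order to which Zorn's lemma is applied.\<close>

definition graph :: "('a \<Rightarrow> 'b) \<Rightarrow> 'a set \<Rightarrow> ('a \<times> 'b) set" where
  "graph w J = (\<lambda>t. (t, w t)) ` J"

lemma mem_graph_iff: "(t, y) \<in> graph w J \<longleftrightarrow> t \<in> J \<and> y = w t"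
  by (auto simp: graph_def)

lemma fst_graph [simp]: "fst ` graph w J = J"
  by (force simp: graph_def)

lemma Union_chain_graphs:
  assumes chain: "chain\<^sub>\<subseteq> C" and graphs: "\<And>G. G \<in> C \<Longrightarrow> \<exists>w J. G = graph w J"
  obtains w where "\<Union>C = graph w (fst ` \<Union>C)"
proof -
  have single_valued: "y1 = y2" if mem: "(t, y1) \<in> \<Union>C" "(t, y2) \<in> \<Union>C" for t y1 y2
  proof -
    obtain G1 G2 where G: "G1 \<in> C" "G2 \<in> C" "(t, y1) \<in> G1" "(t, y2) \<in> G2"
      using mem by blast
    then obtain G where "G \<in> C" "(t, y1) \<in> G" "(t, y2) \<in> G"
      using chain unfolding chain_subset_def by blast
    moreover obtain w J where "G = graph w J"
      using graphs[OF \<open>G \<in> C\<close>] by blast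
    ultimately show ?thesis
      by (simp add: mem_graph_iff)
  qed
  define w where "w t = (SOME y. (t, y) \<in> \<Union>C)" for t
  have w: "(t, w t) \<in> \<Union>C" if mem: "(t, y) \<in> \<Union>C" for t y
    unfolding w_def using mem by (rule someI)
  have "\<Union>C = graph w (fst ` \<Union>C)"
  proof (intro set_eqI iffI)
    fix x assume "x \<in> \<Union>C"
    then show "x \<in> graph w (fst ` \<Union>C)"
      using single_valued w by (cases x) (force simp: mem_graph_iff)
  next
    fix x assume "x \<in> graph w (fst ` \<Union>C)"
    then show "x \<in> \<Union>C"
      using w by (force simp: graph_def)
  qed
  then show ?thesis
    by (rule that)
qed

definition solution_extensions ::
    "complex poly \<Rightarrow> (real \<Rightarrow> complex) \<Rightarrow> real set \<Rightarrow> (real \<times> complex) set set" where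
  "solution_extensions f z I =
     {graph w J | w J. open J \<and> is_interval J \<and> I \<subseteq> J \<and> ode_solution_on f w J \<and> (\<forall>t\<in>I. w t = z t)}"

lemma chain_subset_image:
  assumes "chain\<^sub>\<subseteq> C"
  shows "chain\<^sub>\<subseteq> ((`) g ` C)"
  unfolding chain_subset_def
proof (intro ballI)
  fix X Y assume "X \<in> (`) g ` C" "Y \<in> (`) g ` C"
  then obtain A B where "A \<in> C" "B \<in> C" "X = g ` A" "Y = g ` B"
    by blast
  with assms show "X \<subseteq> Y \<or> Y \<subseteq> X"
    unfolding chain_subset_def by (metis image_mono)
qed

lemma is_interval_Union_chain:
  fixes \<J> :: "real set set"
  assumes "chain\<^sub>\<subseteq> \<J>" "\<And>X. X \<in> \<J> \<Longrightarrow> is_interval X"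
  shows "is_interval (\<Union>\<J>)"
  unfolding is_interval_1
proof (intro ballI allI impI)
  fix a b x assume "a \<in> \<Union>\<J>" "b \<in> \<Union>\<J>" "a \<le> x \<and> x \<le> b"
  then obtain Xa Xb where X: "Xa \<in> \<J>" "Xb \<in> \<J>" "a \<in> Xa" "b \<in> Xb"
    by blast
  with assms(1) obtain X where "X \<in> \<J>" "a \<in> X" "b \<in> X"
    unfolding chain_subset_def by blast
  with assms(2) \<open>a \<le> x \<and> x \<le> b\<close> show "x \<in> \<Union>\<J>"
    unfolding is_interval_1 by blast
qed

lemma ode_solution_on_local:
  assumes "\<And>t. t \<in> J \<Longrightarrow>
    \<exists>T v. t \<in> T \<and> open T \<and> ode_solution_on f v T \<and> (\<forall>s\<in>T. w s = v s)"
  shows "ode_solution_on f w J"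
  unfolding ode_solution_on_def
proof
  fix t assume "t \<in> J"
  then obtain T v where T: "t \<in> T" "open T" "ode_solution_on f v T" "\<forall>s\<in>T. w s = v s"
    using assms by blast
  then have "(v has_vector_derivative poly f (v t)) (at t)"
    unfolding ode_solution_on_def by blast
  then have "(w has_vector_derivative poly f (v t)) (at t)"
    by (rule has_vector_derivative_transform_within_open[OF _ T(2,1)]) (simp add: T(4))
  with T(1,4) show "(w has_vector_derivative poly f (w t)) (at t)"
    by simp
qed

lemma Union_chain_solution_extensions:
  assumes C: "C \<subseteq> solution_extensions f z I" "chain\<^sub>\<subseteq> C" "C \<noteq> {}"
  shows "\<Union>C \<in> solution_extensions f z I"
proof -
  have graphs: "\<exists>w J. G = graph w J" if "G \<in> C" for G
    using subsetD[OF C(1) that] unfolding solution_extensions_def by blast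
  define J where "J = fst ` \<Union>C"
  obtain w where U: "\<Union>C = graph w J"
    unfolding J_def by (rule Union_chain_graphs[OF C(2) graphs])
  have member: "\<exists>wG JG. G = graph wG JG \<and> open JG \<and> is_interval JG \<and> I \<subseteq> JG \<and>
      ode_solution_on f wG JG \<and> (\<forall>t\<in>I. wG t = z t) \<and> (\<forall>t\<in>JG. w t = wG t)"
    if G: "G \<in> C" for G
  proof -
    obtain wG JG where G_ext: "G = graph wG JG" "open JG" "is_interval JG" "I \<subseteq> JG"
        "ode_solution_on f wG JG" "\<forall>t\<in>I. wG t = z t"
      using C(1) G unfolding solution_extensions_def by blast
    have "(t, wG t) \<in> graph w J" if "t \<in> JG" for t
    proof -
      have "(t, wG t) \<in> G"
        using that G_ext(1) by (simp add: mem_graph_iff)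
      with G show ?thesis
        unfolding U[symmetric] by blast
    qed
    then have "\<forall>t\<in>JG. w t = wG t"
      by (auto simp: mem_graph_iff)
    with G_ext show ?thesis
      by blast
  qed
  have J_Union: "J = \<Union>((`) fst ` C)"
    unfolding J_def by blast
  obtain G0 where "G0 \<in> C"
    using C(3) by blast
  then obtain w0 J0 where G0: "G0 = graph w0 J0" "I \<subseteq> J0" "\<forall>t\<in>I. w0 t = z t" "\<forall>t\<in>J0. w t = w0 t"
    using member by blast
  then have "J0 \<subseteq> J"
    unfolding J_def using \<open>G0 \<in> C\<close> by (metis Union_upper fst_graph image_mono)
  with G0 have I_J: "I \<subseteq> J" "\<forall>t\<in>I. w t = z t"
    by auto
  have "open J"
    unfolding J_Union
  proof (intro open_Union ballI)
    fix X assume "X \<in> (`) fst ` C"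
    then obtain G where "G \<in> C" "X = fst ` G"
      by blast
    with member[OF \<open>G \<in> C\<close>] show "open X"
      by auto
  qed
  moreover have "is_interval J"
    unfolding J_Union
  proof (rule is_interval_Union_chain[OF chain_subset_image[OF C(2)]])
    fix X assume "X \<in> (`) fst ` C"
    then obtain G where "G \<in> C" "X = fst ` G"
      by blast
    with member[OF \<open>G \<in> C\<close>] show "is_interval X"
      by auto
  qed
  moreover have "ode_solution_on f w J"
  proof (rule ode_solution_on_local)
    fix t assume "t \<in> J"
    then obtain G where "G \<in> C" "t \<in> fst ` G"
      unfolding J_Union by blast
    moreover obtain wG JG where "G = graph wG JG" "open JG" "ode_solution_on f wG JG"
        "\<forall>s\<in>JG. w s = wG s"
      using member[OF \<open>G \<in> C\<close>] by blast
    ultimately have "t \<in> JG" "open JG" "ode_solution_on f wG JG" "\<forall>s\<in>JG. w s = wG s"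
      by simp_all
    then show "\<exists>T v. t \<in> T \<and> open T \<and> ode_solution_on f v T \<and> (\<forall>s\<in>T. w s = v s)"
      by blast
  qed
  ultimately show ?thesis
    using I_J unfolding solution_extensions_def U by blast
qed

lemma maximal_solution_extension:
  assumes "ode_solution_on f z I" "open I" "is_interval I" "I \<noteq> {}"
  obtains w J where "maximal_solution f w J" "I \<subseteq> J" "\<forall>t\<in>I. w t = z t"
proof -
  have "\<exists>U\<in>solution_extensions f z I. \<forall>X\<in>C. X \<subseteq> U"
    if "C \<in> chains (solution_extensions f z I)" for C
  proof (cases "C = {}")
    case True
    with assms show ?thesis
      unfolding solution_extensions_def by blast
  next
    case False
    with that show ?thesis
      using Union_chain_solution_extensions[of C f z I]
      by (auto simp: chains_def)
  qed
  then have "\<exists>M\<in>solution_extensions f z I. \<forall>X\<in>solution_extensions f z I. M \<subseteq> X \<longrightarrow> X = M"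
    by (intro Zorn_Lemma2) blast
  then obtain M where M: "M \<in> solution_extensions f z I"
      and M_max: "\<forall>X\<in>solution_extensions f z I. M \<subseteq> X \<longrightarrow> X = M"
    by blast
  obtain w J where wJ: "M = graph w J" "open J" "is_interval J" "I \<subseteq> J"
      "ode_solution_on f w J" "\<forall>t\<in>I. w t = z t"
    using M unfolding solution_extensions_def by blast
  have "J \<noteq> {}"
    using wJ(4) assms(4) by blast
  have "maximal_solution f w J"
    unfolding maximal_solution_def
  proof (intro conjI allI impI)
    fix J' w'
    assume "open J' \<and> is_interval J' \<and> J \<subseteq> J' \<and> ode_solution_on f w' J' \<and> (\<forall>t\<in>J. w' t = w t)"
    then have H: "open J'" "is_interval J'" "J \<subseteq> J'" "ode_solution_on f w' J'" "\<forall>t\<in>J. w' t = w t"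
      by auto
    have "graph w' J' \<in> solution_extensions f z I"
      using H wJ unfolding solution_extensions_def by (intro CollectI exI[of _ w'] exI[of _ J']) auto
    moreover have "M \<subseteq> graph w' J'"
      using H wJ(1) by (auto simp: graph_def)
    ultimately have "graph w' J' = graph w J"
      using M_max wJ(1) by blast
    then show "J' = J"
      by (metis fst_graph)
  qed (fact wJ(2,3,5) \<open>J \<noteq> {}\<close>)+
  then show ?thesis
    by (rule that[OF _ wJ(4,6)])
qed

lemma maximal_solution_no_blowup_at_interior:
  assumes "maximal_solution f w J" "b \<in> J" "F \<le> at b" "F \<noteq> bot"
  shows "\<not> filterlim (\<lambda>t. norm (w t)) at_top F"
proof
  have "(w has_vector_derivative poly f (w b)) (at b)"
    using assms(1,2) unfolding maximal_solution_def ode_solution_on_def by blast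
  then have "isCont w b"
    by (rule has_vector_derivative_continuous)
  then have "((\<lambda>t. norm (w t)) \<longlongrightarrow> norm (w b)) (at b)"
    unfolding isCont_def by (rule tendsto_norm)
  then have "((\<lambda>t. norm (w t)) \<longlongrightarrow> norm (w b)) F"
    by (rule tendsto_mono[OF assms(3)])
  moreover assume "filterlim (\<lambda>t. norm (w t)) at_top F"
  then have "filterlim (\<lambda>t. norm (w t)) at_infinity F"
    by (rule filterlim_at_top_imp_at_infinity)
  ultimately show False
    by (rule not_tendsto_and_filterlim_at_infinity[OF assms(4)])
qed

lemma maximal_solution_Sup_eq:
  assumes max: "maximal_solution f w J" and sub: "{a<..<b} \<subseteq> J" "a < b"
    and blowup: "filterlim (\<lambda>t. norm (w t)) at_top (at_left b)"
  shows "bdd_above J" "Sup J = b"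
proof -
  have "b \<notin> J"
    using maximal_solution_no_blowup_at_interior[OF max _ at_le[OF subset_UNIV]] blowup by auto
  moreover have "is_interval J"
    using max unfolding maximal_solution_def by blast
  moreover have mid: "(a + b) / 2 \<in> J"
    using sub by (intro subsetD[OF sub(1)]) auto
  ultimately have J: "J \<subseteq> {..<b}"
  proof (intro subsetI)
    fix t assume "t \<in> J"
    show "t \<in> {..<b}"
    proof (rule ccontr)
      assume "t \<notin> {..<b}"
      then have "(a + b) / 2 \<le> b" "b \<le> t"
        using \<open>a < b\<close> by auto
      then have "b \<in> J"
        using \<open>is_interval J\<close> mid \<open>t \<in> J\<close> unfolding is_interval_1 by blast
      with \<open>b \<notin> J\<close> show False
        by contradiction
    qed
  qed
  then show "bdd_above J"
    by (rule bdd_above_mono[OF bdd_above_Iio])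
  have "Sup {a<..<b} \<le> Sup J"
    using sub \<open>bdd_above J\<close> by (intro cSup_subset_mono) auto
  moreover have "Sup J \<le> b"
    using J sub by (intro cSup_least) auto
  ultimately show "Sup J = b"
    using sub(2) by simp
qed

lemma maximal_solution_Inf_eq:
  assumes max: "maximal_solution f w J" and sub: "{a<..<b} \<subseteq> J" "a < b"
    and blowup: "filterlim (\<lambda>t. norm (w t)) at_top (at_right a)"
  shows "bdd_below J" "Inf J = a"
proof -
  have "a \<notin> J"
    using maximal_solution_no_blowup_at_interior[OF max _ at_le[OF subset_UNIV]] blowup by auto
  moreover have "is_interval J"
    using max unfolding maximal_solution_def by blast
  moreover have mid: "(a + b) / 2 \<in> J"
    using sub by (intro subsetD[OF sub(1)]) auto
  ultimately have J: "J \<subseteq> {a<..}"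
  proof (intro subsetI)
    fix t assume "t \<in> J"
    show "t \<in> {a<..}"
    proof (rule ccontr)
      assume "t \<notin> {a<..}"
      then have "t \<le> a" "a \<le> (a + b) / 2"
        using \<open>a < b\<close> by auto
      then have "a \<in> J"
        using \<open>is_interval J\<close> mid \<open>t \<in> J\<close> unfolding is_interval_1 by blast
      with \<open>a \<notin> J\<close> show False
        by contradiction
    qed
  qed
  then show "bdd_below J"
    by (rule bdd_below_mono[OF bdd_below_Ioi])
  have "Inf J \<le> Inf {a<..<b}"
    using sub \<open>bdd_below J\<close> by (intro cInf_superset_mono) auto
  moreover have "a \<le> Inf J"
    using J sub by (intro cInf_greatest) auto
  ultimately show "Inf J = a"
    using sub(2) by simp
qed

lemma ode_solution_on_reverse_time:
  assumes "ode_solution_on (- f) z I"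
  shows "ode_solution_on f (\<lambda>t. z (- t)) (uminus ` I)"
  unfolding ode_solution_on_def
proof
  fix t assume "t \<in> uminus ` I"
  then have "(z has_vector_derivative - poly f (z (- t))) (at (- t))"
    using assms unfolding ode_solution_on_def by auto
  then have "((z \<circ> uminus) has_vector_derivative (- 1) *\<^sub>R - poly f (z (- t))) (at t)"
    by (intro vector_diff_chain_at) (auto intro!: derivative_eq_intros)
  then show "((\<lambda>t. z (- t)) has_vector_derivative poly f (z (- t))) (at t)"
    by (simp add: o_def)
qed

lemma maximal_solution_blowing_up_at_Sup:
  assumes sol: "ode_solution_on f z {a<..<b}" and "a < b"
    and blowup: "filterlim (\<lambda>t. norm (z t)) at_top (at_left b)"
    and direction: "((\<lambda>t. sgn (z t)) \<longlongrightarrow> P) (at_left b)"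
  obtains w J where "maximal_solution f w J" "bdd_above J"
    "filterlim (\<lambda>t. norm (w t)) at_top (at_left (Sup J))"
    "((\<lambda>t. sgn (w t)) \<longlongrightarrow> P) (at_left (Sup J))"
proof -
  obtain w J where max: "maximal_solution f w J" and sub: "{a<..<b} \<subseteq> J"
      and agree: "\<forall>t\<in>{a<..<b}. w t = z t"
    using maximal_solution_extension[OF sol] \<open>a < b\<close> by (auto simp: is_interval_1)
  have "eventually (\<lambda>t. w t = z t) (at_left b)"
    using eventually_at_left_real[OF \<open>a < b\<close>] by eventually_elim (use agree in auto)
  then have "filterlim (\<lambda>t. norm (w t)) at_top (at_left b)" "((\<lambda>t. sgn (w t)) \<longlongrightarrow> P) (at_left b)"
    using blowup direction by (auto elim!: filterlim_cong[OF refl refl, THEN iffD2, rotated] eventually_mono)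
  with max maximal_solution_Sup_eq[OF max sub \<open>a < b\<close>] show ?thesis
    using that by metis
qed

lemma maximal_solution_blowing_up_at_Inf:
  assumes sol: "ode_solution_on f z {a<..<b}" and "a < b"
    and blowup: "filterlim (\<lambda>t. norm (z t)) at_top (at_right a)"
    and direction: "((\<lambda>t. sgn (z t)) \<longlongrightarrow> P) (at_right a)"
  obtains w J where "maximal_solution f w J" "bdd_below J"
    "filterlim (\<lambda>t. norm (w t)) at_top (at_right (Inf J))"
    "((\<lambda>t. sgn (w t)) \<longlongrightarrow> P) (at_right (Inf J))"
proof -
  obtain w J where max: "maximal_solution f w J" and sub: "{a<..<b} \<subseteq> J"
      and agree: "\<forall>t\<in>{a<..<b}. w t = z t"
    using maximal_solution_extension[OF sol] \<open>a < b\<close> by (auto simp: is_interval_1)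
  have "eventually (\<lambda>t. w t = z t) (at_right a)"
    using eventually_at_right_real[OF \<open>a < b\<close>] by eventually_elim (use agree in auto)
  then have "filterlim (\<lambda>t. norm (w t)) at_top (at_right a)" "((\<lambda>t. sgn (w t)) \<longlongrightarrow> P) (at_right a)"
    using blowup direction by (auto elim!: filterlim_cong[OF refl refl, THEN iffD2, rotated] eventually_mono)
  with max maximal_solution_Inf_eq[OF max sub \<open>a < b\<close>] show ?thesis
    using that by metis
qed

section \<open>Local analysis at infinity\<close>

lemma power_factor_order_le:
  fixes F1 F2 :: "complex \<Rightarrow> complex"
  assumes "isCont F1 0" "isCont F2 0" "F1 0 \<noteq> 0"
    and eq: "eventually (\<lambda>w. w ^ m * F1 w = w ^ k * F2 w) (at 0)"
  shows "k \<le> m"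
proof (rule ccontr)
  assume "\<not> k \<le> m"
  then have split: "w ^ k = w ^ m * w ^ (k - m)" for w :: complex
    by (simp flip: power_add)
  have "eventually (\<lambda>w. w ^ (k - m) * F2 w = F1 w) (at 0)"
    using eq eventually_neq_at_within[of 0 0] by eventually_elim (simp add: split mult.assoc)
  moreover have "((\<lambda>w. w ^ (k - m) * F2 w) \<longlongrightarrow> 0 ^ (k - m) * F2 0) (at 0)"
    using assms(2) unfolding isCont_def by (intro tendsto_intros) auto
  ultimately have "(F1 \<longlongrightarrow> 0) (at 0)"
    using \<open>\<not> k \<le> m\<close> by (simp add: power_0_left Lim_transform_eventually)
  moreover have "(F1 \<longlongrightarrow> F1 0) (at 0)"
    using assms(1) by (simp add: isCont_def)
  ultimately have "0 = F1 0"
    by (rule tendsto_unique[OF at_neq_bot])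
  with assms(3) show False
    by simp
qed

lemma power_factor_unique:
  fixes F1 F2 :: "complex \<Rightarrow> complex"
  assumes "isCont F1 0" "isCont F2 0" "F1 0 \<noteq> 0" "F2 0 \<noteq> 0"
    and eq: "eventually (\<lambda>w. w ^ m * F1 w = w ^ k * F2 w) (at 0)"
  shows "m = k" "F1 0 = F2 0"
proof -
  have "eventually (\<lambda>w. w ^ k * F2 w = w ^ m * F1 w) (at 0)"
    using eq by (rule eventually_mono) (rule sym)
  then have "m \<le> k"
    by (rule power_factor_order_le[OF assms(2,1,4)])
  with power_factor_order_le[OF assms(1-3) eq] show "m = k"
    by simp
  have "eventually (\<lambda>w. F1 w = F2 w) (at 0)"
    using eq eventually_neq_at_within[of 0 0] by eventually_elim (simp add: \<open>m = k\<close>)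
  moreover have "(F1 \<longlongrightarrow> F1 0) (at 0)"
    using assms(1) by (simp add: isCont_def)
  ultimately have "(F2 \<longlongrightarrow> F1 0) (at 0)"
    by (rule Lim_transform_eventually[rotated])
  moreover have "(F2 \<longlongrightarrow> F2 0) (at 0)"
    using assms(2) by (simp add: isCont_def)
  ultimately show "F1 0 = F2 0"
    by (rule tendsto_unique[OF at_neq_bot])
qed

lemma power_factor_of_primitive:
  fixes H G K :: "complex \<Rightarrow> complex"
  assumes "0 < r" "0 < k" and G: "G holomorphic_on ball 0 r" "G 0 \<noteq> 0" and K: "isCont K 0" "K 0 \<noteq> 0"
    and H: "\<And>w. w \<in> ball 0 r \<Longrightarrow> H w = w ^ k * G w"
    and H': "\<And>w. w \<in> ball 0 r \<Longrightarrow> (H has_field_derivative w ^ n * K w) (at w)"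
  shows "k = Suc n" "G 0 = K 0 / of_nat (Suc n)"
proof -
  define E where "E w = of_nat k * G w + w * deriv G w" for w
  have centre: "0 \<in> ball (0::complex) r"
    using \<open>0 < r\<close> by simp
  have "eventually (\<lambda>w. w ^ (k - 1) * E w = w ^ n * K w) (at 0)"
    using eventually_at_in_open'[OF open_ball centre]
  proof eventually_elim
    case (elim w)
    have "((\<lambda>w. w ^ k * G w) has_field_derivative of_nat k * w ^ (k - 1) * G w + w ^ k * deriv G w) (at w)"
      using holomorphic_derivI[OF G(1) open_ball elim] by (auto intro!: derivative_eq_intros)
    then have "(H has_field_derivative of_nat k * w ^ (k - 1) * G w + w ^ k * deriv G w) (at w)"
      by (rule has_field_derivative_transform_within_open[OF _ open_ball elim]) (simp add: H)
    moreover have "w ^ k = w * w ^ (k - 1)"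
      using \<open>0 < k\<close> by (simp flip: power_Suc)
    ultimately have "(H has_field_derivative w ^ (k - 1) * E w) (at w)"
      unfolding E_def by (simp add: algebra_simps)
    with H'[OF elim] show ?case
      using DERIV_unique by blast
  qed
  moreover have "E holomorphic_on ball 0 r"
    unfolding E_def by (intro holomorphic_intros G(1) holomorphic_deriv) auto
  then have "isCont E 0"
    using centre by (metis continuous_on_eq_continuous_at holomorphic_on_imp_continuous_on open_ball)
  moreover have "E 0 \<noteq> 0"
    using \<open>0 < k\<close> G(2) by (simp add: E_def)
  ultimately have "k - 1 = n" "E 0 = K 0"
    using power_factor_unique[OF _ K(1) _ K(2)] by blast+
  then show "k = Suc n" "G 0 = K 0 / of_nat (Suc n)"
    using \<open>0 < k\<close> by (auto simp: E_def field_simps)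
qed

lemma primitive_power_factor:
  fixes K :: "complex \<Rightarrow> complex"
  assumes "0 < R" and K: "K holomorphic_on ball 0 R" "\<And>w. w \<in> ball 0 R \<Longrightarrow> K w \<noteq> 0"
  obtains r G H where "0 < r" "ball (0::complex) r \<subseteq> ball 0 R" "G holomorphic_on ball 0 r"
    "\<And>w. w \<in> ball 0 r \<Longrightarrow> G w \<noteq> 0" "G 0 = K 0 / of_nat (Suc n)"
    "\<And>w. w \<in> ball 0 r \<Longrightarrow> (H has_field_derivative w ^ n * K w) (at w)"
    "\<And>w. w \<in> ball 0 r \<Longrightarrow> H w = w ^ Suc n * G w"
proof -
  have "(\<lambda>w. w ^ n * K w) holomorphic_on ball 0 R"
    by (intro holomorphic_intros K)
  then obtain g where g: "\<And>w. w \<in> ball 0 R \<Longrightarrow> (g has_field_derivative w ^ n * K w) (at w within ball 0 R)"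
    using holomorphic_convex_primitive'[OF convex_ball open_ball] by blast
  define H where "H w = g w - g 0" for w
  have H': "(H has_field_derivative w ^ n * K w) (at w)" if "w \<in> ball 0 R" for w
    using g[OF that] at_within_open[OF that open_ball] unfolding H_def
    by (auto intro!: derivative_eq_intros)
  have nonconstant: "\<not> H constant_on ball 0 R"
  proof
    assume "H constant_on ball 0 R"
    then obtain c where c: "\<And>w. w \<in> ball 0 R \<Longrightarrow> H w = c"
      unfolding constant_on_def by blast
    define w1 where "w1 = complex_of_real (R / 2)"
    have w1: "w1 \<in> ball 0 R" "w1 \<noteq> 0"
      using \<open>0 < R\<close> by (auto simp: w1_def)
    have "(H has_field_derivative 0) (at w1)"
      by (rule has_field_derivative_transform_within_open[of "\<lambda>_. c", OF _ open_ball w1(1)])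
         (auto simp: c)
    then have "w1 ^ n * K w1 = 0"
      using H'[OF w1(1)] DERIV_unique by blast
    with w1 K(2) show False
      by simp
  qed
  have "H holomorphic_on ball 0 R"
    using H' holomorphic_on_open open_ball by blast
  then obtain G r k where Gr: "0 < k" "0 < r" "ball (0::complex) r \<subseteq> ball 0 R" "G holomorphic_on ball 0 r"
      "\<And>w. w \<in> ball 0 r \<Longrightarrow> H w = (w - 0) ^ k * G w" "\<And>w. w \<in> ball 0 r \<Longrightarrow> G w \<noteq> 0"
    by (rule holomorphic_factor_zero_nonconstant[OF _ open_ball connected_ball _ _ nonconstant])
       (use \<open>0 < R\<close> H_def in auto)
  have H'_r: "(H has_field_derivative w ^ n * K w) (at w)" if "w \<in> ball 0 r" for w
    using H' Gr(3) that by blast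
  have "isCont K 0"
    using K(1) \<open>0 < R\<close> by (metis centre_in_ball continuous_on_eq_continuous_at holomorphic_on_imp_continuous_on open_ball)
  then have "k = Suc n" "G 0 = K 0 / of_nat (Suc n)"
    using power_factor_of_primitive[OF Gr(2,1,4) _ _ _ _ H'_r] Gr(2,5,6) K(2) \<open>0 < R\<close> by auto
  with Gr H'_r show ?thesis
    by (intro that[of r G H]) simp_all
qed

lemma holomorphic_root_on_ball:
  fixes G :: "complex \<Rightarrow> complex"
  assumes "G holomorphic_on ball c r" "\<And>w. w \<in> ball c r \<Longrightarrow> G w \<noteq> 0" "0 < m" "0 < r"
  obtains \<rho> where "\<rho> holomorphic_on ball c r" "\<rho> c = 1" "\<And>w. w \<in> ball c r \<Longrightarrow> \<rho> w ^ m = G w / G c"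
proof -
  obtain g where g: "g holomorphic_on ball c r" "\<And>w. w \<in> ball c r \<Longrightarrow> G w = exp (g w)"
    using contractible_imp_holomorphic_log[OF assms(1) convex_imp_contractible[OF convex_ball] assms(2)]
    by blast
  define \<rho> where "\<rho> w = exp ((g w - g c) / of_nat m)" for w
  show ?thesis
  proof (rule that[of \<rho>])
    show "\<rho> holomorphic_on ball c r"
      unfolding \<rho>_def using \<open>0 < m\<close> by (intro holomorphic_intros g(1)) auto
    show "\<rho> c = 1"
      by (simp add: \<rho>_def)
    show "\<rho> w ^ m = G w / G c" if "w \<in> ball c r" for w
      using that \<open>0 < m\<close> \<open>0 < r\<close>
      by (simp add: \<rho>_def g(2) exp_diff flip: exp_of_nat_mult)
  qed
qed

lemma holomorphic_local_inverse:
  fixes \<Phi> :: "complex \<Rightarrow> complex"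
  assumes "\<Phi> holomorphic_on S" "open S" "z \<in> S" "deriv \<Phi> z \<noteq> 0"
  obtains \<epsilon> \<Psi> where "0 < \<epsilon>" "\<Psi> holomorphic_on ball (\<Phi> z) \<epsilon>" "\<Psi> (\<Phi> z) = z"
    "\<And>v. v \<in> ball (\<Phi> z) \<epsilon> \<Longrightarrow> \<Psi> v \<in> S \<and> \<Phi> (\<Psi> v) = v"
proof -
  obtain r where r: "0 < r" "ball z r \<subseteq> S" "inj_on \<Phi> (ball z r)"
    using has_complex_derivative_locally_injective[OF assms(1,3,2,4)] .
  have hol: "\<Phi> holomorphic_on ball z r"
    using assms(1) r(2) by (rule holomorphic_on_subset)
  obtain \<Psi> where \<Psi>: "\<Psi> holomorphic_on \<Phi> ` ball z r" "\<And>w. w \<in> ball z r \<Longrightarrow> \<Psi> (\<Phi> w) = w"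
    using holomorphic_has_inverse[OF hol open_ball r(3)] by metis
  have "open (\<Phi> ` ball z r)" "\<Phi> z \<in> \<Phi> ` ball z r"
    using open_mapping_thm3[OF hol open_ball r(3)] r(1) by auto
  then obtain \<epsilon> where \<epsilon>: "0 < \<epsilon>" "ball (\<Phi> z) \<epsilon> \<subseteq> \<Phi> ` ball z r"
    using open_contains_ball by blast
  show ?thesis
  proof (rule that[of \<epsilon> \<Psi>])
    show "\<Psi> holomorphic_on ball (\<Phi> z) \<epsilon>"
      using \<Psi>(1) \<epsilon>(2) by (rule holomorphic_on_subset)
    show "\<Psi> (\<Phi> z) = z"
      using \<Psi>(2) r(1) by simp
    show "\<Psi> v \<in> S \<and> \<Phi> (\<Psi> v) = v" if v: "v \<in> ball (\<Phi> z) \<epsilon>" for v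
    proof -
      obtain w where "w \<in> ball z r" "v = \<Phi> w"
        using v \<epsilon>(2) by blast
      with \<Psi>(2) r(2) show ?thesis
        by auto
    qed
  qed (fact \<epsilon>(1))
qed

lemma power_factor_normal_coordinate:
  fixes G :: "complex \<Rightarrow> complex"
  assumes "0 < r" and G: "G holomorphic_on ball 0 r" "\<And>w. w \<in> ball 0 r \<Longrightarrow> G w \<noteq> 0" and "0 < m"
  obtains \<epsilon> \<Psi> where "0 < \<epsilon>" "\<Psi> holomorphic_on ball 0 \<epsilon>" "\<Psi> 0 = 0"
    "\<And>v. v \<in> ball 0 \<epsilon> \<Longrightarrow> \<Psi> v \<in> ball 0 r \<and> \<Psi> v ^ m * G (\<Psi> v) = G 0 * v ^ m"
    "((\<lambda>v. \<Psi> v / v) \<longlongrightarrow> 1) (at 0)"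
proof -
  obtain \<rho> where \<rho>: "\<rho> holomorphic_on ball 0 r" "\<rho> 0 = 1" "\<And>w. w \<in> ball 0 r \<Longrightarrow> \<rho> w ^ m = G w / G 0"
    using holomorphic_root_on_ball[OF G \<open>0 < m\<close> \<open>0 < r\<close>] by blast
  have centre: "0 \<in> ball (0::complex) r"
    using \<open>0 < r\<close> by simp
  define \<Phi> where "\<Phi> w = w * \<rho> w" for w
  have "\<Phi> holomorphic_on ball 0 r"
    unfolding \<Phi>_def by (intro holomorphic_intros \<rho>(1))
  moreover have "deriv \<Phi> 0 = 1"
    using holomorphic_derivI[OF \<rho>(1) open_ball centre] \<rho>(2) unfolding \<Phi>_def
    by (intro DERIV_imp_deriv) (auto intro!: derivative_eq_intros)
  ultimately obtain \<epsilon> \<Psi> where \<Psi>: "0 < \<epsilon>" "\<Psi> holomorphic_on ball 0 \<epsilon>" "\<Psi> 0 = 0"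
      "\<And>v. v \<in> ball 0 \<epsilon> \<Longrightarrow> \<Psi> v \<in> ball 0 r \<and> \<Psi> v * \<rho> (\<Psi> v) = v"
    using holomorphic_local_inverse[of \<Phi> "ball 0 r" 0] centre by (auto simp: \<Phi>_def)
  have "\<Psi> v ^ m * G (\<Psi> v) = G 0 * v ^ m" if "v \<in> ball 0 \<epsilon>" for v
  proof -
    have inv: "\<Psi> v \<in> ball 0 r" "\<Psi> v * \<rho> (\<Psi> v) = v"
      using \<Psi>(4)[OF that] by auto
    have "G (\<Psi> v) = G 0 * \<rho> (\<Psi> v) ^ m"
      using \<rho>(3)[OF inv(1)] G(2)[OF centre] by simp
    then have "\<Psi> v ^ m * G (\<Psi> v) = G 0 * (\<Psi> v * \<rho> (\<Psi> v)) ^ m"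
      by (simp add: power_mult_distrib)
    then show ?thesis
      by (simp only: inv(2))
  qed
  moreover have "((\<lambda>v. \<Psi> v / v) \<longlongrightarrow> 1) (at 0)"
  proof -
    have "isCont \<Psi> 0"
      using \<Psi>(1,2) by (metis centre_in_ball continuous_on_eq_continuous_at holomorphic_on_imp_continuous_on open_ball)
    moreover have "isCont \<rho> 0"
      using \<rho>(1) centre by (metis continuous_on_eq_continuous_at holomorphic_on_imp_continuous_on open_ball)
    ultimately have "((\<lambda>v. inverse (\<rho> (\<Psi> v))) \<longlongrightarrow> inverse (\<rho> (\<Psi> 0))) (at 0)"
      using \<rho>(2) \<Psi>(3) by (intro tendsto_intros isCont_tendsto_compose[of _ \<rho>]) (auto simp: isCont_def)
    moreover have "eventually (\<lambda>v. inverse (\<rho> (\<Psi> v)) = \<Psi> v / v) (at 0)"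
      using eventually_at_in_open'[OF open_ball centre_in_ball[THEN iffD2, OF \<Psi>(1)]]
        eventually_neq_at_within[of 0 0]
    proof eventually_elim
      case (elim v)
      then have prod: "\<Psi> v * \<rho> (\<Psi> v) = v" and "v \<noteq> 0"
        using \<Psi>(4)[of v] by auto
      then have "\<rho> (\<Psi> v) \<noteq> 0"
        by auto
      with prod \<open>v \<noteq> 0\<close> show ?case
        by (auto simp: field_simps)
    qed
    ultimately show ?thesis
      using \<rho>(2) \<Psi>(3) by (simp add: Lim_transform_eventually)
  qed
  ultimately show ?thesis
    using that \<Psi>(1-3,4) by blast
qed

lemma power_factor_level_curve:
  fixes H G :: "complex \<Rightarrow> complex"
  assumes "0 < r" and G: "G holomorphic_on ball 0 r" "\<And>w. w \<in> ball 0 r \<Longrightarrow> G w \<noteq> 0"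
    and "0 < m" and H: "\<And>w. w \<in> ball 0 r \<Longrightarrow> H w = w ^ m * G w" and \<beta>: "\<beta> ^ m * G 0 = -1"
  obtains \<delta> W where "0 < \<delta>"
    "\<And>\<tau>. \<tau> \<in> {0<..<\<delta>} \<Longrightarrow>
      W differentiable (at \<tau>) \<and> W \<tau> \<in> ball 0 r \<and> W \<tau> \<noteq> 0 \<and> H (W \<tau>) = - of_real \<tau>"
    "(W \<longlongrightarrow> 0) (at_right 0)" "((\<lambda>\<tau>. sgn (W \<tau>)) \<longlongrightarrow> sgn \<beta>) (at_right 0)"
proof -
  obtain \<epsilon> \<Psi> where \<Psi>: "0 < \<epsilon>" "\<Psi> holomorphic_on ball 0 \<epsilon>" "\<Psi> 0 = 0"
      "\<And>v. v \<in> ball 0 \<epsilon> \<Longrightarrow> \<Psi> v \<in> ball 0 r \<and> \<Psi> v ^ m * G (\<Psi> v) = G 0 * v ^ m"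
      and \<Psi>_quotient: "((\<lambda>v. \<Psi> v / v) \<longlongrightarrow> 1) (at 0)"
    using power_factor_normal_coordinate[OF \<open>0 < r\<close> G \<open>0 < m\<close>] by blast
  have "\<beta> \<noteq> 0"
    using \<beta> \<open>0 < m\<close> by (auto simp: power_0_left)
  define v where "v \<tau> = \<beta> * of_real (root m \<tau>)" for \<tau>
  have v_pos: "v \<tau> \<noteq> 0 \<and> sgn (v \<tau>) = sgn \<beta>" if "0 < \<tau>" for \<tau>
    using that \<open>0 < m\<close> \<open>\<beta> \<noteq> 0\<close> by (simp add: v_def real_root_gt_zero sgn_mult sgn_of_real)
  have "(v \<longlongrightarrow> \<beta> * of_real (root m 0)) (at_right 0)"
    unfolding v_def by (intro tendsto_intros)
  then have v_lim: "(v \<longlongrightarrow> 0) (at_right 0)"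
    by simp
  have "eventually (\<lambda>\<tau>. v \<tau> \<in> ball 0 \<epsilon>) (at_right 0)"
    using topological_tendstoD[OF v_lim open_ball[of 0 \<epsilon>]] \<Psi>(1) by simp
  then obtain \<delta> where "0 < \<delta>" and v_in: "\<And>\<tau>. 0 < \<tau> \<Longrightarrow> \<tau> < \<delta> \<Longrightarrow> v \<tau> \<in> ball 0 \<epsilon>"
    unfolding eventually_at_right_field by auto
  define W where "W \<tau> = \<Psi> (v \<tau>)" for \<tau>
  have W: "W differentiable (at \<tau>) \<and> W \<tau> \<in> ball 0 r \<and> W \<tau> \<noteq> 0 \<and> H (W \<tau>) = - of_real \<tau>"
    if \<tau>: "\<tau> \<in> {0<..<\<delta>}" for \<tau>
  proof (intro conjI)
    have v: "v \<tau> \<in> ball 0 \<epsilon>"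
      using v_in \<tau> by simp
    then show W_in: "W \<tau> \<in> ball 0 r"
      using \<Psi>(4) unfolding W_def by blast
    have "H (W \<tau>) = G 0 * \<beta> ^ m * of_real (root m \<tau> ^ m)"
      using H[OF W_in] \<Psi>(4)[OF v] by (simp add: W_def v_def power_mult_distrib)
    also have "\<dots> = - of_real \<tau>"
      using \<beta> \<tau> \<open>0 < m\<close> by (simp add: mult.commute)
    finally show H_W: "H (W \<tau>) = - of_real \<tau>" .
    show "W \<tau> \<noteq> 0"
    proof
      assume "W \<tau> = 0"
      with H[OF W_in] H_W \<tau> \<open>0 < m\<close> show False
        by (simp add: power_0_left)
    qed
    have "(v has_vector_derivative \<beta> * of_real (inverse (real m * root m \<tau> ^ (m - Suc 0)))) (at \<tau>)"
      unfolding v_def using DERIV_real_root[OF \<open>0 < m\<close>, of \<tau>] \<tau>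
      by (intro has_vector_derivative_mult_right has_vector_derivative_of_real) auto
    moreover have "(\<Psi> has_field_derivative deriv \<Psi> (v \<tau>)) (at (v \<tau>))"
      using holomorphic_derivI[OF \<Psi>(2) open_ball v] .
    ultimately have "(\<Psi> \<circ> v) differentiable (at \<tau>)"
      by (rule differentiableI_vector[OF field_vector_diff_chain_at])
    then show "W differentiable (at \<tau>)"
      by (simp add: W_def[abs_def] comp_def)
  qed
  have "isCont \<Psi> 0"
    using \<Psi>(1,2) by (metis centre_in_ball continuous_on_eq_continuous_at holomorphic_on_imp_continuous_on open_ball)
  then have W_lim: "(W \<longlongrightarrow> 0) (at_right 0)"
    unfolding W_def using isCont_tendsto_compose[OF _ v_lim] \<Psi>(3) by fastforce
  have v_nz: "eventually (\<lambda>\<tau>. v \<tau> \<noteq> 0) (at_right 0)"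
    using eventually_at_right_less[of 0] by eventually_elim (simp add: v_pos)
  with v_lim have "filterlim v (at 0) (at_right 0)"
    by (rule filterlim_atI)
  then have quotient: "((\<lambda>\<tau>. W \<tau> / v \<tau>) \<longlongrightarrow> 1) (at_right 0)"
    unfolding W_def by (rule filterlim_compose[OF \<Psi>_quotient])
  have sgn_v: "((\<lambda>\<tau>. sgn (v \<tau>)) \<longlongrightarrow> sgn \<beta>) (at_right 0)"
    using eventually_at_right_less[of 0] by (rule tendsto_eventually[OF eventually_mono]) (simp add: v_pos)
  have "((\<lambda>\<tau>. sgn (v \<tau>) * sgn (W \<tau> / v \<tau>)) \<longlongrightarrow> sgn \<beta> * sgn 1) (at_right 0)"
    using tendsto_mult[OF sgn_v tendsto_sgn[OF quotient]] by simp
  moreover have "eventually (\<lambda>\<tau>. sgn (v \<tau>) * sgn (W \<tau> / v \<tau>) = sgn (W \<tau>)) (at_right 0)"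
    using eventually_at_right_less[of 0] by eventually_elim (use v_pos \<open>\<beta> \<noteq> 0\<close> in \<open>simp add: sgn_zero_iff\<close>)
  ultimately have "((\<lambda>\<tau>. sgn (W \<tau>)) \<longlongrightarrow> sgn \<beta>) (at_right 0)"
    by (simp add: Lim_transform_eventually)
  with \<open>0 < \<delta>\<close> W W_lim show ?thesis
    using that by blast
qed

lemma inverse_of_level_curve_solves_ode:
  fixes f :: "complex poly" and W :: "real \<Rightarrow> complex"
  assumes "degree f \<ge> 2" "open T" "\<tau> \<in> T"
    and W: "W differentiable (at \<tau>)" "W \<tau> \<noteq> 0" "poly (reflect_poly f) (W \<tau>) \<noteq> 0"
    and H: "(H has_field_derivative - (W \<tau> ^ (degree f - 2)) / poly (reflect_poly f) (W \<tau>)) (at (W \<tau>))"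
    and level: "\<And>s. s \<in> T \<Longrightarrow> H (W s) = - of_real s"
  shows "((\<lambda>s. inverse (W s)) has_vector_derivative - poly f (inverse (W \<tau>))) (at \<tau>)"
proof -
  define w where "w = W \<tau>"
  define D where "D = vector_derivative W (at \<tau>)"
  have W': "(W has_vector_derivative D) (at \<tau>)"
    using W(1) by (simp add: D_def vector_derivative_works)
  have "((H \<circ> W) has_vector_derivative D * (- (w ^ (degree f - 2)) / poly (reflect_poly f) w)) (at \<tau>)"
    using field_vector_diff_chain_at[OF W' H] by (simp add: w_def)
  moreover have "((\<lambda>s. - complex_of_real s) has_vector_derivative - 1) (at \<tau>)"
    using has_vector_derivative_minus[OF has_vector_derivative_of_real[OF DERIV_ident]] by simp
  then have "((H \<circ> W) has_vector_derivative - 1) (at \<tau>)"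
    by (rule has_vector_derivative_transform_within_open[OF _ \<open>open T\<close> \<open>\<tau> \<in> T\<close>])
       (simp add: level)
  ultimately have "D * (- (w ^ (degree f - 2)) / poly (reflect_poly f) w) = - 1"
    by (rule vector_derivative_unique_at)
  moreover have "w ^ degree f = w ^ (degree f - 2) * w\<^sup>2"
    using \<open>degree f \<ge> 2\<close> by (metis le_add_diff_inverse2 power_add)
  then have "poly (reflect_poly f) w = w ^ (degree f - 2) * w\<^sup>2 * poly f (inverse w)"
    using poly_reflect_poly_nz[of w f] W(2) by (simp add: w_def)
  ultimately have D: "D = w\<^sup>2 * poly f (inverse w)"
    using W(2,3) by (simp add: w_def field_simps)
  have "((inverse \<circ> W) has_vector_derivative D * - (inverse w ^ 2)) (at \<tau>)"
    using field_vector_diff_chain_at[OF W' DERIV_inverse[OF W(2)]] by (simp add: w_def power2_eq_square)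
  then show ?thesis
    using W(2) by (simp add: D w_def comp_def field_simps power2_eq_square)
qed

lemma time_function_at_infinity:
  fixes f :: "complex poly"
  assumes "degree f \<ge> 2"
  obtains r G H where "0 < r" "G holomorphic_on ball 0 r" "\<And>w. w \<in> ball 0 r \<Longrightarrow> G w \<noteq> 0"
    "G 0 = - 1 / (lead_coeff f * of_nat (degree f - 1))"
    "\<And>w. w \<in> ball 0 r \<Longrightarrow> poly (reflect_poly f) w \<noteq> 0"
    "\<And>w. w \<in> ball 0 r \<Longrightarrow>
      (H has_field_derivative - (w ^ (degree f - 2)) / poly (reflect_poly f) w) (at w)"
    "\<And>w. w \<in> ball 0 r \<Longrightarrow> H w = w ^ (degree f - 1) * G w"
proof -
  define q where "q = reflect_poly f"
  have "poly q 0 \<noteq> 0"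
    using assms by (auto simp: q_def)
  then obtain R where "0 < R" and q_nz: "\<And>w. w \<in> ball 0 R \<Longrightarrow> poly q w \<noteq> 0"
    using continuous_at_avoid[of 0 "poly q" 0] by (auto simp: dist_commute)
  define K where "K w = - 1 / poly q w" for w
  have "K holomorphic_on ball 0 R" "\<And>w. w \<in> ball 0 R \<Longrightarrow> K w \<noteq> 0"
    using q_nz unfolding K_def by (auto intro!: holomorphic_intros)
  then obtain r G H where r: "0 < r" "ball (0::complex) r \<subseteq> ball 0 R" and
      G: "G holomorphic_on ball 0 r" "\<And>w. w \<in> ball 0 r \<Longrightarrow> G w \<noteq> 0"
        "G 0 = K 0 / of_nat (Suc (degree f - 2))"
      and H': "\<And>w. w \<in> ball 0 r \<Longrightarrow> (H has_field_derivative w ^ (degree f - 2) * K w) (at w)"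
      and H: "\<And>w. w \<in> ball 0 r \<Longrightarrow> H w = w ^ Suc (degree f - 2) * G w"
    using primitive_power_factor[OF \<open>0 < R\<close>, of K "degree f - 2"] by blast
  have d: "Suc (degree f - 2) = degree f - 1"
    using assms by simp
  show ?thesis
  proof (rule that[of r G H])
    show "G 0 = - 1 / (lead_coeff f * of_nat (degree f - 1))"
      using G(3) by (simp add: K_def q_def d)
    show "poly (reflect_poly f) w \<noteq> 0" if "w \<in> ball 0 r" for w
      using q_nz r(2) that unfolding q_def by blast
    show "(H has_field_derivative - (w ^ (degree f - 2)) / poly (reflect_poly f) w) (at w)"
      if "w \<in> ball 0 r" for w
      using H'[OF that] by (simp add: K_def q_def)
    show "H w = w ^ (degree f - 1) * G w" if "w \<in> ball 0 r" for w
      using H[OF that] by (simp add: d)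
  qed (fact r(1) G(1,2))+
qed

lemma critical_direction_root:
  fixes f :: "complex poly" and P :: complex and \<alpha> :: real
  assumes "degree f \<ge> 2" "cmod P = 1" "lead_coeff f * P ^ degree f = of_real \<alpha> * P" "0 < \<alpha>"
  obtains \<beta> where "\<beta> ^ (degree f - 1) = lead_coeff f * of_nat (degree f - 1)" "sgn \<beta> = cnj P"
proof
  define m where "m = degree f - 1"
  have "0 < m" and d: "degree f = Suc m"
    using assms(1) by (auto simp: m_def)
  have cnj_P: "P * cnj P = 1"
    using assms(2) by (simp add: complex_norm_square[symmetric])
  have "lead_coeff f = lead_coeff f * (P * cnj P) ^ Suc m"
    by (simp add: cnj_P)
  also have "\<dots> = (lead_coeff f * P ^ degree f) * cnj P ^ Suc m"
    by (simp add: d power_mult_distrib)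
  also have "\<dots> = of_real \<alpha> * cnj P ^ m"
    using cnj_P by (simp add: assms(3))
  finally have lead: "lead_coeff f = of_real \<alpha> * cnj P ^ m" .
  define \<beta> where "\<beta> = cnj P * of_real (root m (m * \<alpha>))"
  have "\<beta> ^ m = cnj P ^ m * of_real (root m (m * \<alpha>) ^ m)"
    by (simp add: \<beta>_def power_mult_distrib)
  also have "\<dots> = lead_coeff f * of_nat m"
    using \<open>0 < m\<close> \<open>0 < \<alpha>\<close> by (simp add: lead)
  finally show "\<beta> ^ (degree f - 1) = lead_coeff f * of_nat (degree f - 1)"
    by (simp add: m_def)
  have "sgn (cnj P) = cnj P"
    using assms(2) by (simp add: sgn_eq)
  then show "sgn \<beta> = cnj P"
    using \<open>0 < m\<close> \<open>0 < \<alpha>\<close> by (simp add: \<beta>_def sgn_mult sgn_of_real real_root_gt_zero)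
qed

lemma reversed_flow_solution_from_infinity:
  fixes f :: "complex poly" and P :: complex and \<alpha> :: real
  assumes deg: "degree f \<ge> 2" and P: "cmod P = 1"
    and critical: "lead_coeff f * P ^ degree f = of_real \<alpha> * P" and "0 < \<alpha>"
  obtains \<delta> Z where "0 < \<delta>" "ode_solution_on (- f) Z {0<..<\<delta>}"
    "filterlim (\<lambda>\<tau>. norm (Z \<tau>)) at_top (at_right 0)" "((\<lambda>\<tau>. sgn (Z \<tau>)) \<longlongrightarrow> P) (at_right 0)"
proof -
  obtain r G H where r: "0 < r" and G: "G holomorphic_on ball 0 r" "\<And>w. w \<in> ball 0 r \<Longrightarrow> G w \<noteq> 0"
      "G 0 = - 1 / (lead_coeff f * of_nat (degree f - 1))"
      and q_nz: "\<And>w. w \<in> ball 0 r \<Longrightarrow> poly (reflect_poly f) w \<noteq> 0"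
      and H': "\<And>w. w \<in> ball 0 r \<Longrightarrow>
        (H has_field_derivative - (w ^ (degree f - 2)) / poly (reflect_poly f) w) (at w)"
      and H: "\<And>w. w \<in> ball 0 r \<Longrightarrow> H w = w ^ (degree f - 1) * G w"
    using time_function_at_infinity[OF deg] by blast
  obtain \<beta> where \<beta>: "\<beta> ^ (degree f - 1) = lead_coeff f * of_nat (degree f - 1)" "sgn \<beta> = cnj P"
    using critical_direction_root[OF assms] .
  have "lead_coeff f \<noteq> 0" "of_nat (degree f - 1) \<noteq> (0::complex)"
    using deg by auto
  then have \<beta>_G: "\<beta> ^ (degree f - 1) * G 0 = - 1"
    unfolding \<beta>(1) G(3) by simp
  have "0 < degree f - 1"
    using deg by simp
  obtain \<delta> W where "0 < \<delta>"
      and W: "\<And>\<tau>. \<tau> \<in> {0<..<\<delta>} \<Longrightarrow>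
        W differentiable (at \<tau>) \<and> W \<tau> \<in> ball 0 r \<and> W \<tau> \<noteq> 0 \<and> H (W \<tau>) = - of_real \<tau>"
      and W_lim: "(W \<longlongrightarrow> 0) (at_right 0)" and W_sgn: "((\<lambda>\<tau>. sgn (W \<tau>)) \<longlongrightarrow> sgn \<beta>) (at_right 0)"
    using power_factor_level_curve[OF r G(1,2) \<open>0 < degree f - 1\<close> H \<beta>_G] by blast
  define Z where "Z \<tau> = inverse (W \<tau>)" for \<tau>
  have "ode_solution_on (- f) Z {0<..<\<delta>}"
    unfolding ode_solution_on_def Z_def poly_minus
  proof
    fix \<tau> :: real assume \<tau>: "\<tau> \<in> {0<..<\<delta>}"
    then have "W \<tau> \<in> ball 0 r"
      using W by blast
    moreover from this have "poly (reflect_poly f) (W \<tau>) \<noteq> 0"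
      by (rule q_nz)
    ultimately show "((\<lambda>s. inverse (W s)) has_vector_derivative - poly f (inverse (W \<tau>))) (at \<tau>)"
      using \<tau> W H' by (intro inverse_of_level_curve_solves_ode[OF deg open_greaterThanLessThan \<tau>]) auto
  qed
  moreover have "filterlim (\<lambda>\<tau>. norm (Z \<tau>)) at_top (at_right 0)"
  proof -
    have "eventually (\<lambda>\<tau>. 0 < norm (W \<tau>)) (at_right 0)"
      using eventually_at_right_real[OF \<open>0 < \<delta>\<close>] by eventually_elim (use W in auto)
    from filterlim_inverse_at_top[OF tendsto_norm_zero[OF W_lim] this]
    show ?thesis
      by (simp add: Z_def norm_inverse)
  qed
  moreover have "((\<lambda>\<tau>. sgn (Z \<tau>)) \<longlongrightarrow> P) (at_right 0)"
  proof -
    have "P * cnj P = 1"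
      using P by (simp add: complex_norm_square[symmetric])
    then have "inverse (cnj P) = P"
      using inverse_unique[of "cnj P" P] by (simp add: mult.commute)
    moreover have "cnj P \<noteq> 0"
      using P by auto
    ultimately show ?thesis
      using tendsto_inverse[OF W_sgn] unfolding Z_def \<beta>(2) by simp
  qed
  ultimately show ?thesis
    by (rule that[OF \<open>0 < \<delta>\<close>])
qed

section \<open>Separatrices\<close>

lemma critical_direction_positive_separatrix:
  assumes "degree f \<ge> 2" "cmod P = 1" "lead_coeff f * P ^ degree f = of_real \<alpha> * P" "0 < \<alpha>"
  obtains z I where "maximal_solution f z I" "bdd_above I"
    "filterlim (\<lambda>t. norm (z t)) at_top (at_left (Sup I))"
    "((\<lambda>t. sgn (z t)) \<longlongrightarrow> P) (at_left (Sup I))"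
proof -
  obtain \<delta> Z where "0 < \<delta>" and sol: "ode_solution_on (- f) Z {0<..<\<delta>}"
      and blowup: "filterlim (\<lambda>\<tau>. norm (Z \<tau>)) at_top (at_right 0)"
      and direction: "((\<lambda>\<tau>. sgn (Z \<tau>)) \<longlongrightarrow> P) (at_right 0)"
    using reversed_flow_solution_from_infinity[OF assms] .
  have "ode_solution_on f (\<lambda>t. Z (- t)) {- \<delta><..<0}"
    using ode_solution_on_reverse_time[OF sol] by simp
  moreover have "filterlim (\<lambda>t. norm (Z (- t))) at_top (at_left 0)"
    "((\<lambda>t. sgn (Z (- t))) \<longlongrightarrow> P) (at_left 0)"
    using blowup direction by (simp_all add: at_left_minus filterlim_filtermap)
  ultimately show ?thesis
    using maximal_solution_blowing_up_at_Sup \<open>0 < \<delta>\<close> that by (metis neg_less_0_iff_less)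
qed

lemma critical_direction_negative_separatrix:
  assumes "degree f \<ge> 2" "cmod P = 1" "lead_coeff f * P ^ degree f = of_real \<alpha> * P" "\<alpha> < 0"
  obtains z I where "maximal_solution f z I" "bdd_below I"
    "filterlim (\<lambda>t. norm (z t)) at_top (at_right (Inf I))"
    "((\<lambda>t. sgn (z t)) \<longlongrightarrow> P) (at_right (Inf I))"
proof -
  have "lead_coeff (- f) * P ^ degree (- f) = of_real (- \<alpha>) * P"
    using assms(3) by simp
  then obtain \<delta> Z where "0 < \<delta>" "ode_solution_on f Z {0<..<\<delta>}"
      "filterlim (\<lambda>\<tau>. norm (Z \<tau>)) at_top (at_right 0)" "((\<lambda>\<tau>. sgn (Z \<tau>)) \<longlongrightarrow> P) (at_right 0)"
    using reversed_flow_solution_from_infinity[of "- f" P "- \<alpha>"] assms(1,2,4) by auto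
  then show ?thesis
    using maximal_solution_blowing_up_at_Inf that by metis
qed

theorem mainTheorem3:
  fixes f :: "complex poly" and p1 p2 \<alpha> :: real
  assumes "degree f \<ge> 2"
    and "p1\<^sup>2 + p2\<^sup>2 = 1"
    and "p1 * hom_Q f (degree f) p1 p2 - p2 * hom_P f (degree f) p1 p2 = 0"
    and "hom_P f (degree f) p1 p2 = \<alpha> * p1" and "hom_Q f (degree f) p1 p2 = \<alpha> * p2"
  shows "\<alpha> \<noteq> 0 \<and>
    (\<alpha> > 0 \<longrightarrow> (\<exists>z I. maximal_solution f z I \<and> bdd_above I \<and>
        filterlim (\<lambda>t. norm (z t)) at_top (at_left (Sup I)) \<and>
        ((\<lambda>t. z t / complex_of_real (norm (z t))) \<longlongrightarrow> Complex p1 p2) (at_left (Sup I)))) \<and>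
    (\<alpha> < 0 \<longrightarrow> (\<exists>z I. maximal_solution f z I \<and> bdd_below I \<and>
        filterlim (\<lambda>t. norm (z t)) at_top (at_right (Inf I)) \<and>
        ((\<lambda>t. z t / complex_of_real (norm (z t))) \<longlongrightarrow> Complex p1 p2) (at_right (Inf I))))"
proof -
  define P where "P = Complex p1 p2"
  have P: "cmod P = 1"
    using assms(2) by (simp add: P_def cmod_def)
  have critical: "lead_coeff f * P ^ degree f = of_real \<alpha> * P"
    using assms(4,5) by (simp add: P_def hom_P_def hom_Q_def complex_eq_iff)
  have "\<alpha> \<noteq> 0"
    using critical P assms(1) by (auto simp: leading_coeff_0_iff)
  with critical_direction_positive_separatrix[OF assms(1) P critical]
    critical_direction_negative_separatrix[OF assms(1) P critical]
  show ?thesis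
    unfolding P_def sgn_eq[symmetric] by metis
qed

end
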